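(* Let $(X_i,A_i,Y_i)_{1\le i\le n}$ be random with $X_i\in\mathcal X$, $A_i\in\{0,1\}$, $Y_i\in\mathcal Y$, let $X'_1,\dots,X'_M$ be the distinct values of $X_1,\dots,X_n$ and $I_k=\{i:X_i=X'_k\}$. Suppose that, conditionally on $(X_{1:n},A_{1:n})$, the joint distribution of $(Y_1,\dots,Y_n)$ is invariant under every permutation of $[n]$ mapping each $I_k$ to itself. For all $x\in\mathcal X$ define (when $N^{(0)}\ge1$) $$\hat C^2(x)=\Big\{y\in\mathcal Y: s(x,y)\le Q_{1-\alpha^2}\Big(\sum_{k=1}^M\sum_{i\in I_k}\frac{N_k^0}{(N^{(0)})^2N_k}\delta_{\bar S_i}+\sum_{k=1}^M\sum_{\substack{i,j\in I_k\\ i\ne j}}\frac{N_k^0(N_k^0-1)}{(N^{(0)})^2N_k(N_k-1)}\delta_{\min\{\bar S_i,\bar S_j\}}+\sum_{1\le k\ne k'\le M}\sum_{i\in I_k}\sum_{j\in I_{k'}}\frac{N_k^0N_{k'}^0}{(N^{(0)})^2N_kN_{k'}}\delta_{\min\{\bar S_i,\bar S_j\}}\Big)\Big\},$$ with $\frac{N_k^0(N_k^0-1)}{N_k(N_k-1)}:=0$ when $N_k=1$. Then $$\mathbb E\Big[\Big(\frac{1}{N^{(0)}}\sum_{i\in I_{A=0}}\mathbf 1\{Y_i\notin\hat C^2(X_i)\}\Big)^2\ \Big|\ X_{1:n},A_{1:n}\Big]\le\alpha^2.$$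
   Context: $Y_i$ is observed only when $A_i=1$. $s:\mathcal X\times\mathcal Y\to\mathbb R$ is a fixed measurable score, $S_i=s(X_i,Y_i)$, and $\bar S_i=S_i$ if $A_i=1$, $\bar S_i=+\infty$ if $A_i=0$. $I_{A=0}=\{i:A_i=0\}$, $N^{(0)}=|I_{A=0}|$; $N_k=|I_k|$, $N_k^0=|\{i\in I_k:A_i=0\}|$. $Q_{1-\beta}(P)=\inf\{t:\mathbb P_{T\sim P}(T\le t)\ge1-\beta\}$ for a distribution $P$ on $\mathbb R\cup\{+\infty\}$; $\delta_v$ is a point mass. The miscoverage proportion $\frac{1}{N^{(0)}}\sum_{i\in I_{A=0}}\mathbf 1\{Y_i\notin\hat C^2(X_i)\}$ is defined as $0$ when $N^{(0)}=0$. *)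

theory Defs
  imports "HOL-Probability.Probability"
begin

text \<open>Data indices are 0..n-1. The conditioning variables X_{1:n}, A_{1:n} are fixed
  (deterministic) functions; A i = True encodes A_i = 1 (Y_i observed).
  The groups I_k are indexed by the distinct values v of X on {..<n}.\<close>

definition grp :: "(nat \<Rightarrow> 'x) \<Rightarrow> nat \<Rightarrow> 'x \<Rightarrow> nat set" where
  "grp X n v = {i \<in> {..<n}. X i = v}"

definition Nk :: "(nat \<Rightarrow> 'x) \<Rightarrow> nat \<Rightarrow> 'x \<Rightarrow> nat" where
  "Nk X n v = card (grp X n v)"

definition Nk0 :: "(nat \<Rightarrow> 'x) \<Rightarrow> (nat \<Rightarrow> bool) \<Rightarrow> nat \<Rightarrow> 'x \<Rightarrow> nat" where
  "Nk0 X A n v = card {i \<in> grp X n v. \<not> A i}"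

definition N0 :: "(nat \<Rightarrow> bool) \<Rightarrow> nat \<Rightarrow> nat" where
  "N0 A n = card {i \<in> {..<n}. \<not> A i}"

definition Sbar :: "('x \<Rightarrow> 'y \<Rightarrow> real) \<Rightarrow> (nat \<Rightarrow> 'x) \<Rightarrow> (nat \<Rightarrow> bool) \<Rightarrow> (nat \<Rightarrow> 'y) \<Rightarrow> nat \<Rightarrow> ereal" where
  "Sbar s X A y i = (if A i then ereal (s (X i) (y i)) else \<infinity>)"

definition pairc :: "(nat \<Rightarrow> 'x) \<Rightarrow> (nat \<Rightarrow> bool) \<Rightarrow> nat \<Rightarrow> 'x \<Rightarrow> real" where
  "pairc X A n v = (if Nk X n v = 1 then 0 else
     (real (Nk0 X A n v) * (real (Nk0 X A n v) - 1)) / (real (Nk X n v) * (real (Nk X n v) - 1)))"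

text \<open>Cumulative distribution function P(T <= t) of the discrete mixture of point masses
  appearing in the definition of C^2, as a function of t in the extended reals.\<close>
definition mixcdf :: "('x \<Rightarrow> 'y \<Rightarrow> real) \<Rightarrow> (nat \<Rightarrow> 'x) \<Rightarrow> (nat \<Rightarrow> bool) \<Rightarrow> nat \<Rightarrow> (nat \<Rightarrow> 'y) \<Rightarrow> ereal \<Rightarrow> real" where
  "mixcdf s X A n y t =
     (let V = X ` {..<n}; N = real (N0 A n); S = Sbar s X A y in
      (\<Sum>v\<in>V. \<Sum>i\<in>grp X n v.
          real (Nk0 X A n v) / (N\<^sup>2 * real (Nk X n v)) * (if S i \<le> t then 1 else 0))
    + (\<Sum>v\<in>V. \<Sum>i\<in>grp X n v. \<Sum>j\<in>grp X n v - {i}.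
          pairc X A n v / N\<^sup>2 * (if min (S i) (S j) \<le> t then 1 else 0))
    + (\<Sum>v\<in>V. \<Sum>v'\<in>V - {v}. \<Sum>i\<in>grp X n v. \<Sum>j\<in>grp X n v'.
          real (Nk0 X A n v) * real (Nk0 X A n v') / (N\<^sup>2 * real (Nk X n v) * real (Nk X n v'))
          * (if min (S i) (S j) \<le> t then 1 else 0)))"

definition quant2 :: "real \<Rightarrow> ('x \<Rightarrow> 'y \<Rightarrow> real) \<Rightarrow> (nat \<Rightarrow> 'x) \<Rightarrow> (nat \<Rightarrow> bool) \<Rightarrow> nat \<Rightarrow> (nat \<Rightarrow> 'y) \<Rightarrow> ereal" where
  "quant2 \<beta> s X A n y = Inf {t. mixcdf s X A n y t \<ge> 1 - \<beta>}"

definition C2 :: "real \<Rightarrow> ('x \<Rightarrow> 'y \<Rightarrow> real) \<Rightarrow> (nat \<Rightarrow> 'x) \<Rightarrow> (nat \<Rightarrow> bool) \<Rightarrow> nat \<Rightarrow> (nat \<Rightarrow> 'y) \<Rightarrow> 'x \<Rightarrow> 'y set" where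
  "C2 \<alpha> s X A n y x = {yy. ereal (s x yy) \<le> quant2 (\<alpha>\<^sup>2) s X A n y}"

definition miscov :: "real \<Rightarrow> ('x \<Rightarrow> 'y \<Rightarrow> real) \<Rightarrow> (nat \<Rightarrow> 'x) \<Rightarrow> (nat \<Rightarrow> bool) \<Rightarrow> nat \<Rightarrow> (nat \<Rightarrow> 'y) \<Rightarrow> real" where
  "miscov \<alpha> s X A n y = (if N0 A n = 0 then 0 else
     (\<Sum>i\<in>{i \<in> {..<n}. \<not> A i}. if y i \<notin> C2 \<alpha> s X A n y (X i) then 1 else 0) / real (N0 A n))"

end

theory Submission
  imports Defs
begin

text \<open>Squaring the miscoverage proportion turns it into the number of pairs (i, j) of unlabelled
  points that both miss, divided by N0^2. If both miss, then min(S_i, S_j) exceeds the quantile,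
  so the pair lies in the upper \<alpha>^2-tail of a weighted law of pair minima. The permutations
  fixing every group act on index pairs, and pairs in one orbit lie in the tail with equal
  probability. Averaging over orbits turns the expected number of unlabelled tail pairs into N0^2
  times the expected weighted mass of the tail, each orbit carrying exactly the weight it has in the
  mixture defining C^2. Finally, a weighted distribution puts mass at most \<alpha>^2 on its own
  upper \<alpha>^2-tail.\<close>

lemma weighted_upper_tail_le:
  fixes c a :: "'i \<Rightarrow> real"
  assumes "finite I" and c_nonneg: "\<And>k. k \<in> I \<Longrightarrow> 0 \<le> c k" and c_total: "sum c I = 1"
    and "0 \<le> \<beta>"
  shows "(\<Sum>k\<in>I. c k * of_bool (1 - \<beta> \<le> (\<Sum>k'\<in>I. c k' * of_bool (a k' < a k)))) \<le> \<beta>"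
proof -
  define F where "F t = (\<Sum>k'\<in>I. c k' * of_bool (a k' < t))" for t
  have F_mono: "F t \<le> F u" if "t \<le> u" for t u
    unfolding F_def using that c_nonneg by (intro sum_mono) auto
  define K where "K = {k\<in>I. 1 - \<beta> \<le> F (a k)}"
  show ?thesis
  proof (cases "K = {}")
    case True
    then show ?thesis using \<open>0 \<le> \<beta>\<close> unfolding K_def F_def by simp
  next
    case False
    have "finite K" using \<open>finite I\<close> unfolding K_def by simp
    define m where "m = Min (a ` K)"
    have "m \<in> a ` K" using \<open>finite K\<close> False unfolding m_def by simp
    then obtain k0 where k0: "k0 \<in> K" "a k0 = m" by blast
    have K_iff: "1 - \<beta> \<le> F (a k) \<longleftrightarrow> m \<le> a k" if "k \<in> I" for k
    proof
      assume "1 - \<beta> \<le> F (a k)"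
      then show "m \<le> a k" using that \<open>finite K\<close> unfolding m_def K_def by simp
    next
      assume "m \<le> a k"
      then show "1 - \<beta> \<le> F (a k)" using F_mono[of m "a k"] k0 unfolding K_def by auto
    qed
    have "(\<Sum>k\<in>I. c k * of_bool (1 - \<beta> \<le> F (a k))) = (\<Sum>k\<in>I. c k * of_bool (m \<le> a k))"
      using K_iff by (intro sum.cong) auto
    also have "\<dots> = sum c I - F m"
      unfolding F_def sum_subtractf[symmetric] by (intro sum.cong) auto
    also have "\<dots> \<le> \<beta>"
      using c_total k0 unfolding K_def by auto
    finally show ?thesis unfolding F_def .
  qed
qed

lemma sum_class_invariant_eq:
  fixes f :: "'a \<Rightarrow> real"
  assumes "finite U" "equiv U R" "I \<subseteq> U"
    and f_inv: "\<And>p q. (p, q) \<in> R \<Longrightarrow> f p = f q"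
  shows "(\<Sum>q\<in>I. f q) = (\<Sum>p\<in>U. f p * real (card (R``{p} \<inter> I)) / real (card (R``{p})))"
proof -
  have R_sub: "R \<subseteq> U \<times> U" using equiv_type[OF assms(2)] .
  have fin_class: "finite (R``{p})" for p using R_sub \<open>finite U\<close> by (auto intro: finite_subset)
  have card_class: "real (card (R``{q})) > 0" if "q \<in> U" for q
    using equiv_class_self[OF assms(2) that] fin_class[of q] by (auto simp: card_gt_0_iff)
  have class_sym: "(p, q) \<in> R \<longleftrightarrow> (q, p) \<in> R" for p q
    using assms(2) by (auto simp: equiv_def sym_def)
  have "(\<Sum>p\<in>U. f p * real (card (R``{p} \<inter> I)) / real (card (R``{p})))
      = (\<Sum>p\<in>U. \<Sum>q\<in>I. of_bool ((p, q) \<in> R) * (f q / real (card (R``{q}))))"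
  proof (rule sum.cong[OF refl])
    fix p assume "p \<in> U"
    have "(\<Sum>q\<in>I. of_bool ((p, q) \<in> R) * (f q / real (card (R``{q}))))
        = (\<Sum>q\<in>I. of_bool ((p, q) \<in> R) * (f p / real (card (R``{p}))))"
      using equiv_class_eq[OF assms(2)] f_inv by (intro sum.cong) auto
    also have "\<dots> = (\<Sum>q\<in>I. of_bool ((p, q) \<in> R)) * (f p / real (card (R``{p})))"
      by (rule sum_distrib_right[symmetric])
    also have "\<dots> = real (card (R``{p} \<inter> I)) * (f p / real (card (R``{p})))"
      using finite_subset[OF \<open>I \<subseteq> U\<close> \<open>finite U\<close>] by (simp add: Int_commute Image_singleton)
    finally show "f p * real (card (R``{p} \<inter> I)) / real (card (R``{p}))
        = (\<Sum>q\<in>I. of_bool ((p, q) \<in> R) * (f q / real (card (R``{q}))))"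
      by simp
  qed
  also have "\<dots> = (\<Sum>q\<in>I. f q / real (card (R``{q})) * (\<Sum>p\<in>U. of_bool ((q, p) \<in> R)))"
    by (subst sum.swap) (simp add: sum_distrib_left class_sym mult.commute sum_divide_distrib)
  also have "\<dots> = (\<Sum>q\<in>I. f q)"
  proof (rule sum.cong[OF refl])
    fix q assume "q \<in> I"
    have "U \<inter> {p. (q, p) \<in> R} = R``{q}" using R_sub by auto
    then show "f q / real (card (R``{q})) * (\<Sum>p\<in>U. of_bool ((q, p) \<in> R)) = f q"
      using card_class[of q] \<open>q \<in> I\<close> \<open>I \<subseteq> U\<close> \<open>finite U\<close> by auto
  qed
  finally show ?thesis ..
qed

definition index_pairs :: "nat \<Rightarrow> (nat \<times> nat) set" where
  "index_pairs n = {..<n} \<times> {..<n}"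

text \<open>Two index pairs are equivalent iff some permutation preserving X maps one onto the other,
  so the classes are the orbits of index pairs under the exchangeability hypothesis.\<close>

definition pair_equiv :: "(nat \<Rightarrow> 'x) \<Rightarrow> nat \<Rightarrow> ((nat \<times> nat) \<times> (nat \<times> nat)) set" where
  "pair_equiv X n = {(p, q). p \<in> index_pairs n \<and> q \<in> index_pairs n \<and>
     X (fst p) = X (fst q) \<and> X (snd p) = X (snd q) \<and> (fst p = snd p \<longleftrightarrow> fst q = snd q)}"

definition unlabeled :: "(nat \<Rightarrow> bool) \<Rightarrow> nat \<Rightarrow> nat set" where
  "unlabeled A n = {i \<in> {..<n}. \<not> A i}"

text \<open>pair_weight X A n (i, j) is the mass that the mixture in mixcdf puts on min (Sbar i) (Sbar j):
  each of its three kinds of coefficients is the fraction of unlabelled pairs in the class of (i, j),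
  divided by N0^2.\<close>

definition pair_weight :: "(nat \<Rightarrow> 'x) \<Rightarrow> (nat \<Rightarrow> bool) \<Rightarrow> nat \<Rightarrow> nat \<times> nat \<Rightarrow> real" where
  "pair_weight X A n p =
     real (card (pair_equiv X n `` {p} \<inter> unlabeled A n \<times> unlabeled A n))
       / ((real (N0 A n))\<^sup>2 * real (card (pair_equiv X n `` {p})))"

lemma finite_index_pairs: "finite (index_pairs n)"
  unfolding index_pairs_def by simp

lemma equiv_pair_equiv: "equiv (index_pairs n) (pair_equiv X n)"
  unfolding equiv_def refl_on_def sym_def trans_def pair_equiv_def by auto

lemma unlabeled_pairs_subset: "unlabeled A n \<times> unlabeled A n \<subseteq> index_pairs n"
  unfolding unlabeled_def index_pairs_def by auto

lemma card_unlabeled: "card (unlabeled A n) = N0 A n"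
  unfolding unlabeled_def N0_def ..

lemma pair_weight_nonneg: "0 \<le> pair_weight X A n p"
  unfolding pair_weight_def by simp

lemma sum_unlabeled_pairs_class_invariant_eq:
  fixes f :: "nat \<times> nat \<Rightarrow> real"
  assumes "\<And>p q. (p, q) \<in> pair_equiv X n \<Longrightarrow> f p = f q"
  shows "(\<Sum>q\<in>unlabeled A n \<times> unlabeled A n. f q)
       = (real (N0 A n))\<^sup>2 * (\<Sum>p\<in>index_pairs n. pair_weight X A n p * f p)"
proof (cases "N0 A n = 0")
  case True
  then have "unlabeled A n = {}"
    using card_unlabeled[of A n] unfolding unlabeled_def by simp
  then show ?thesis using True by simp
next
  case False
  have "(\<Sum>q\<in>unlabeled A n \<times> unlabeled A n. f q) = (\<Sum>p\<in>index_pairs n.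
      f p * real (card (pair_equiv X n `` {p} \<inter> unlabeled A n \<times> unlabeled A n))
        / real (card (pair_equiv X n `` {p})))"
    by (rule sum_class_invariant_eq[OF finite_index_pairs equiv_pair_equiv unlabeled_pairs_subset assms])
  also have "\<dots> = (real (N0 A n))\<^sup>2 * (\<Sum>p\<in>index_pairs n. pair_weight X A n p * f p)"
    unfolding pair_weight_def sum_distrib_left using False by (intro sum.cong) simp_all
  finally show ?thesis .
qed

lemma sum_pair_weight:
  assumes "N0 A n \<noteq> 0"
  shows "(\<Sum>p\<in>index_pairs n. pair_weight X A n p) = 1"
  using sum_unlabeled_pairs_class_invariant_eq[of X n "\<lambda>_. 1" A] assms
  by (simp add: card_cartesian_product card_unlabeled power2_eq_square)

lemma card_offdiag:
  assumes "finite G"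
  shows "real (card {q \<in> G \<times> G. fst q \<noteq> snd q}) = real (card G) * (real (card G) - 1)"
proof -
  have "G \<times> G = {q \<in> G \<times> G. fst q \<noteq> snd q} \<union> (\<lambda>l. (l, l)) ` G"
    and "{q \<in> G \<times> G. fst q \<noteq> snd q} \<inter> (\<lambda>l. (l, l)) ` G = {}" by auto
  moreover have "card ((\<lambda>l. (l, l)) ` G) = card G" by (rule card_image) (auto simp: inj_on_def)
  ultimately have "card G * card G = card {q \<in> G \<times> G. fst q \<noteq> snd q} + card G"
    using assms card_Un_disjoint[of "{q \<in> G \<times> G. fst q \<noteq> snd q}" "(\<lambda>l. (l, l)) ` G"]
    by (simp add: card_cartesian_product)
  then have "real (card G) * real (card G) = real (card {q \<in> G \<times> G. fst q \<noteq> snd q}) + real (card G)"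
    by (metis of_nat_add of_nat_mult)
  then show ?thesis by (simp add: algebra_simps)
qed

lemma finite_grp: "finite (grp X n v)"
  unfolding grp_def by simp

lemma pair_weight_diag:
  assumes "i < n"
  shows "pair_weight X A n (i, i) = real (Nk0 X A n (X i)) / ((real (N0 A n))\<^sup>2 * real (Nk X n (X i)))"
proof -
  have "pair_equiv X n `` {(i, i)} = (\<lambda>l. (l, l)) ` grp X n (X i)"
    and "pair_equiv X n `` {(i, i)} \<inter> unlabeled A n \<times> unlabeled A n
         = (\<lambda>l. (l, l)) ` {l \<in> grp X n (X i). \<not> A l}"
    using assms unfolding pair_equiv_def index_pairs_def grp_def unlabeled_def by auto
  moreover have "inj (\<lambda>l::nat. (l, l))" by (auto simp: inj_on_def)
  ultimately show ?thesis
    unfolding pair_weight_def Nk_def Nk0_def by (simp add: card_image inj_on_subset)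
qed

lemma pair_weight_same_group:
  assumes "i < n" "j < n" "i \<noteq> j" "X i = X j"
  shows "pair_weight X A n (i, j) = pairc X A n (X i) / (real (N0 A n))\<^sup>2"
proof -
  let ?G = "grp X n (X i)"
  let ?H = "{l \<in> grp X n (X i). \<not> A l}"
  have "pair_equiv X n `` {(i, j)} = {q \<in> ?G \<times> ?G. fst q \<noteq> snd q}"
    and "pair_equiv X n `` {(i, j)} \<inter> unlabeled A n \<times> unlabeled A n = {q \<in> ?H \<times> ?H. fst q \<noteq> snd q}"
    using assms unfolding pair_equiv_def index_pairs_def grp_def unlabeled_def by auto
  then have card_class: "real (card (pair_equiv X n `` {(i, j)})) = real (Nk X n (X i)) * (real (Nk X n (X i)) - 1)"
    and card_unlabeled_class: "real (card (pair_equiv X n `` {(i, j)} \<inter> unlabeled A n \<times> unlabeled A n))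
          = real (Nk0 X A n (X i)) * (real (Nk0 X A n (X i)) - 1)"
    unfolding Nk_def Nk0_def by (simp_all add: card_offdiag finite_grp)
  have "{i, j} \<subseteq> ?G" using assms unfolding grp_def by auto
  then have "card {i, j} \<le> Nk X n (X i)" unfolding Nk_def using finite_grp by (rule card_mono[rotated])
  then have "Nk X n (X i) \<noteq> 1" using \<open>i \<noteq> j\<close> by simp
  then show ?thesis
    unfolding pair_weight_def pairc_def card_class card_unlabeled_class by (simp add: divide_divide_eq_left mult.commute)
qed

lemma pair_weight_different_groups:
  assumes "i < n" "j < n" "X i \<noteq> X j"
  shows "pair_weight X A n (i, j) = real (Nk0 X A n (X i)) * real (Nk0 X A n (X j)) /
      ((real (N0 A n))\<^sup>2 * real (Nk X n (X i)) * real (Nk X n (X j)))"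
proof -
  have "pair_equiv X n `` {(i, j)} = grp X n (X i) \<times> grp X n (X j)"
    and "pair_equiv X n `` {(i, j)} \<inter> unlabeled A n \<times> unlabeled A n
         = {l \<in> grp X n (X i). \<not> A l} \<times> {l \<in> grp X n (X j). \<not> A l}"
    using assms unfolding pair_equiv_def index_pairs_def grp_def unlabeled_def by auto
  then show ?thesis
    unfolding pair_weight_def Nk_def Nk0_def by (simp add: card_cartesian_product field_simps)
qed

lemma sum_grp_regroup:
  "(\<Sum>v\<in>X ` {..<n}. \<Sum>i\<in>grp X n v. f v i) = (\<Sum>i<n. f (X i) i)"
proof -
  have "(\<Sum>i<n. f (X i) i) = (\<Sum>v\<in>X ` {..<n}. \<Sum>i\<in>{i\<in>{..<n}. X i = v}. f (X i) i)"
    by (rule sum.image_gen) simp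
  also have "\<dots> = (\<Sum>v\<in>X ` {..<n}. \<Sum>i\<in>grp X n v. f v i)"
    unfolding grp_def by (intro sum.cong) auto
  finally show ?thesis ..
qed

lemma sum_grp_pairs_regroup:
  "(\<Sum>v\<in>X ` {..<n}. \<Sum>v'\<in>X ` {..<n} - {v}. \<Sum>i\<in>grp X n v. \<Sum>j\<in>grp X n v'. f v v' i j)
   = (\<Sum>i<n. \<Sum>j\<in>{j\<in>{..<n}. X j \<noteq> X i}. f (X i) (X j) i j)"
proof -
  have "(\<Sum>v\<in>X ` {..<n}. \<Sum>v'\<in>X ` {..<n} - {v}. \<Sum>i\<in>grp X n v. \<Sum>j\<in>grp X n v'. f v v' i j)
      = (\<Sum>i<n. \<Sum>v'\<in>X ` {..<n} - {X i}. \<Sum>j\<in>grp X n v'. f (X i) v' i j)"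
    by (subst sum.swap) (rule sum_grp_regroup)
  also have "\<dots> = (\<Sum>i<n. \<Sum>j\<in>{j\<in>{..<n}. X j \<noteq> X i}. f (X i) (X j) i j)"
  proof (rule sum.cong[OF refl])
    fix i
    let ?J = "{j\<in>{..<n}. X j \<noteq> X i}"
    have "(\<Sum>j\<in>?J. f (X i) (X j) i j) = (\<Sum>v'\<in>X ` ?J. \<Sum>j\<in>{j\<in>?J. X j = v'}. f (X i) (X j) i j)"
      by (rule sum.image_gen) simp
    also have "X ` ?J = X ` {..<n} - {X i}" by auto
    also have "(\<Sum>v'\<in>X ` {..<n} - {X i}. \<Sum>j\<in>{j\<in>?J. X j = v'}. f (X i) (X j) i j)
        = (\<Sum>v'\<in>X ` {..<n} - {X i}. \<Sum>j\<in>grp X n v'. f (X i) v' i j)"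
      unfolding grp_def by (intro sum.cong) auto
    finally show "(\<Sum>v'\<in>X ` {..<n} - {X i}. \<Sum>j\<in>grp X n v'. f (X i) v' i j) = (\<Sum>j\<in>?J. f (X i) (X j) i j)" ..
  qed
  finally show ?thesis .
qed

lemma sum_split_by_group:
  assumes "i < n"
  shows "(\<Sum>j<n. g j) = g i + (\<Sum>j\<in>grp X n (X i) - {i}. g j) + (\<Sum>j\<in>{j\<in>{..<n}. X j \<noteq> X i}. g j)"
proof -
  let ?G = "grp X n (X i) - {i}" and ?J = "{j\<in>{..<n}. X j \<noteq> X i}"
  have "{..<n} = insert i (?G \<union> ?J)" "i \<notin> ?G \<union> ?J" "?G \<inter> ?J = {}"
    using assms unfolding grp_def by auto
  moreover have "finite ?G" "finite ?J" using finite_grp by auto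
  ultimately have "sum g {..<n} = g i + (sum g ?G + sum g ?J)"
    by (metis finite_UnI sum.insert sum.union_disjoint)
  then show ?thesis by (simp add: add.assoc)
qed

lemma mixcdf_eq_pair_weights:
  "mixcdf s X A n y t = (\<Sum>p\<in>index_pairs n.
     pair_weight X A n p * of_bool (min (Sbar s X A y (fst p)) (Sbar s X A y (snd p)) \<le> t))"
proof -
  define S where "S = Sbar s X A y"
  define W where "W i j = pair_weight X A n (i, j) * of_bool (min (S i) (S j) \<le> t)" for i j
  have diag: "(\<Sum>v\<in>X ` {..<n}. \<Sum>i\<in>grp X n v. real (Nk0 X A n v) /
        ((real (N0 A n))\<^sup>2 * real (Nk X n v)) * (if S i \<le> t then 1 else 0)) = (\<Sum>i<n. W i i)"
    unfolding sum_grp_regroup W_def by (intro sum.cong) (auto simp: pair_weight_diag)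
  have same: "(\<Sum>v\<in>X ` {..<n}. \<Sum>i\<in>grp X n v. \<Sum>j\<in>grp X n v - {i}.
        pairc X A n v / (real (N0 A n))\<^sup>2 * (if min (S i) (S j) \<le> t then 1 else 0))
      = (\<Sum>i<n. \<Sum>j\<in>grp X n (X i) - {i}. W i j)"
    unfolding sum_grp_regroup W_def by (intro sum.cong refl) (auto simp: pair_weight_same_group grp_def)
  have different: "(\<Sum>v\<in>X ` {..<n}. \<Sum>v'\<in>X ` {..<n} - {v}. \<Sum>i\<in>grp X n v. \<Sum>j\<in>grp X n v'.
        real (Nk0 X A n v) * real (Nk0 X A n v') / ((real (N0 A n))\<^sup>2 * real (Nk X n v) * real (Nk X n v'))
        * (if min (S i) (S j) \<le> t then 1 else 0))
      = (\<Sum>i<n. \<Sum>j\<in>{j\<in>{..<n}. X j \<noteq> X i}. W i j)"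
    unfolding sum_grp_pairs_regroup W_def by (intro sum.cong refl) (auto simp: pair_weight_different_groups)
  have "mixcdf s X A n y t = (\<Sum>i<n. W i i) + (\<Sum>i<n. \<Sum>j\<in>grp X n (X i) - {i}. W i j)
      + (\<Sum>i<n. \<Sum>j\<in>{j\<in>{..<n}. X j \<noteq> X i}. W i j)"
    unfolding mixcdf_def Let_def S_def[symmetric] diag same different ..
  also have "\<dots> = (\<Sum>i<n. \<Sum>j<n. W i j)"
    by (simp add: sum_split_by_group[where X = X] sum.distrib)
  also have "\<dots> = (\<Sum>p\<in>index_pairs n. W (fst p) (snd p))"
    unfolding index_pairs_def sum.cartesian_product by (simp add: case_prod_beta)
  finally show ?thesis unfolding W_def S_def by simp
qed

text \<open>The permutations in the exchangeability hypothesis need not preserve A, so the tail event is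
  defined through the scores of all points instead of Sbar; since Sbar \<ge> S, this only enlarges
  the tail.\<close>

definition pair_score :: "('x \<Rightarrow> 'y \<Rightarrow> real) \<Rightarrow> (nat \<Rightarrow> 'x) \<Rightarrow> (nat \<Rightarrow> 'y) \<Rightarrow> nat \<times> nat \<Rightarrow> real" where
  "pair_score s X y p = min (s (X (fst p)) (y (fst p))) (s (X (snd p)) (y (snd p)))"

definition pair_cdf_below ::
    "('x \<Rightarrow> 'y \<Rightarrow> real) \<Rightarrow> (nat \<Rightarrow> 'x) \<Rightarrow> (nat \<Rightarrow> bool) \<Rightarrow> nat \<Rightarrow> (nat \<Rightarrow> 'y) \<Rightarrow> real \<Rightarrow> real" where
  "pair_cdf_below s X A n y t = (\<Sum>q\<in>index_pairs n. pair_weight X A n q * of_bool (pair_score s X y q < t))"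

definition tail_indicator :: "real \<Rightarrow> ('x \<Rightarrow> 'y \<Rightarrow> real) \<Rightarrow> (nat \<Rightarrow> 'x) \<Rightarrow> (nat \<Rightarrow> bool) \<Rightarrow> nat
    \<Rightarrow> nat \<times> nat \<Rightarrow> (nat \<Rightarrow> 'y) \<Rightarrow> real" where
  "tail_indicator \<beta> s X A n p y = of_bool (1 - \<beta> \<le> pair_cdf_below s X A n y (pair_score s X y p))"

lemma sum_pair_weight_tail_indicator_le:
  assumes "N0 A n \<noteq> 0" "0 \<le> \<beta>"
  shows "(\<Sum>p\<in>index_pairs n. pair_weight X A n p * tail_indicator \<beta> s X A n p y) \<le> \<beta>"
  using weighted_upper_tail_le[OF finite_index_pairs pair_weight_nonneg sum_pair_weight[OF assms(1)] assms(2),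
      where a = "pair_score s X y"]
  unfolding tail_indicator_def pair_cdf_below_def .

lemma tail_indicator_if_quantile_less:
  assumes "quant2 \<beta> s X A n y < ereal (pair_score s X y p)"
  shows "tail_indicator \<beta> s X A n p y = 1"
proof -
  obtain t where t: "1 - \<beta> \<le> mixcdf s X A n y t" "t < ereal (pair_score s X y p)"
    using assms unfolding quant2_def by (auto simp: Inf_less_iff)
  have "mixcdf s X A n y t \<le> pair_cdf_below s X A n y (pair_score s X y p)"
    unfolding mixcdf_eq_pair_weights pair_cdf_below_def
  proof (intro sum_mono mult_left_mono pair_weight_nonneg)
    fix q
    have "ereal (pair_score s X y q) \<le> min (Sbar s X A y (fst q)) (Sbar s X A y (snd q))"
      unfolding pair_score_def Sbar_def by auto
    then have "ereal (pair_score s X y q) < ereal (pair_score s X y p)"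
      if "min (Sbar s X A y (fst q)) (Sbar s X A y (snd q)) \<le> t"
      using that t(2) by (meson order.trans le_less_trans)
    then show "of_bool (min (Sbar s X A y (fst q)) (Sbar s X A y (snd q)) \<le> t)
        \<le> (of_bool (pair_score s X y q < pair_score s X y p) :: real)"
      by auto
  qed
  with t(1) show ?thesis unfolding tail_indicator_def by simp
qed

lemma miscov_sq_le_tail_count:
  assumes "N0 A n \<noteq> 0"
  shows "(miscov \<alpha> s X A n y)\<^sup>2
    \<le> (\<Sum>q\<in>unlabeled A n \<times> unlabeled A n. tail_indicator (\<alpha>\<^sup>2) s X A n q y) / (real (N0 A n))\<^sup>2"
proof -
  define miss where "miss i = (y i \<notin> C2 \<alpha> s X A n y (X i))" for i
  have "miscov \<alpha> s X A n y = (\<Sum>i\<in>unlabeled A n. of_bool (miss i)) / real (N0 A n)"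
    unfolding miscov_def miss_def unlabeled_def of_bool_def using assms by simp
  moreover have "(\<Sum>i\<in>unlabeled A n. of_bool (miss i))\<^sup>2
      = (\<Sum>q\<in>unlabeled A n \<times> unlabeled A n. of_bool (miss (fst q) \<and> miss (snd q)) :: real)"
    unfolding power2_eq_square sum_product sum.cartesian_product by (simp add: case_prod_beta of_bool_conj)
  moreover have "(\<Sum>q\<in>unlabeled A n \<times> unlabeled A n. of_bool (miss (fst q) \<and> miss (snd q)))
      \<le> (\<Sum>q\<in>unlabeled A n \<times> unlabeled A n. tail_indicator (\<alpha>\<^sup>2) s X A n q y)"
  proof (rule sum_mono)
    fix q
    have "quant2 (\<alpha>\<^sup>2) s X A n y < ereal (pair_score s X y q)" if "miss (fst q)" "miss (snd q)"
      using that unfolding miss_def C2_def pair_score_def by (auto simp: min_def)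
    then show "of_bool (miss (fst q) \<and> miss (snd q)) \<le> tail_indicator (\<alpha>\<^sup>2) s X A n q y"
      using tail_indicator_if_quantile_less unfolding tail_indicator_def by fastforce
  qed
  ultimately show ?thesis
    by (simp add: power_divide divide_right_mono)
qed

lemma measurable_tail_indicator:
  assumes "sets M = sets (PiM {..<n} (\<lambda>_. Ym))" "\<And>x. s x \<in> borel_measurable Ym" "p \<in> index_pairs n"
  shows "tail_indicator \<beta> s X A n p \<in> borel_measurable M"
  unfolding measurable_cong_sets[OF assms(1) refl]
proof -
  have score: "(\<lambda>y. pair_score s X y q) \<in> borel_measurable (PiM {..<n} (\<lambda>_. Ym))"
    if "q \<in> index_pairs n" for q
  proof -
    have "(\<lambda>y. s (X i) (y i)) \<in> borel_measurable (PiM {..<n} (\<lambda>_. Ym))" if "i < n" for i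
      by (rule measurable_compose[OF _ assms(2)]) (use that in simp)
    then show ?thesis
      using that unfolding pair_score_def index_pairs_def by (intro borel_measurable_min) auto
  qed
  have "(\<lambda>y. pair_cdf_below s X A n y (pair_score s X y p)) \<in> borel_measurable (PiM {..<n} (\<lambda>_. Ym))"
    unfolding pair_cdf_below_def of_bool_def
    using score assms(3) by measurable
  then show "tail_indicator \<beta> s X A n p \<in> borel_measurable (PiM {..<n} (\<lambda>_. Ym))"
    unfolding tail_indicator_def of_bool_def by measurable
qed

lemma integrable_tail_indicator:
  assumes "finite_measure M" "sets M = sets (PiM {..<n} (\<lambda>_. Ym))" "\<And>x. s x \<in> borel_measurable Ym"
    "p \<in> index_pairs n"
  shows "integrable M (tail_indicator \<beta> s X A n p)"
  using measurable_tail_indicator[OF assms(2-4)]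
  by (intro finite_measure.integrable_const_bound[OF assms(1), where B = 1]) (auto simp: tail_indicator_def)

lemma pair_equiv_permutation_exists:
  assumes "(p, q) \<in> pair_equiv X n"
  obtains \<pi> where "\<pi> permutes {..<n}" "\<forall>k<n. X (\<pi> k) = X k" "map_prod \<pi> \<pi> p = q"
proof -
  obtain i j l m where pq: "p = (i, j)" "q = (l, m)" by (cases p, cases q)
  have ij: "i < n" "j < n" "l < n" "m < n" "X i = X l" "X j = X m" "i = j \<longleftrightarrow> l = m"
    using assms unfolding pair_equiv_def index_pairs_def pq by auto
  have transpose_perm: "Transposition.transpose a b permutes {..<n}" "\<forall>k<n. X (Transposition.transpose a b k) = X k"
    if "a < n" "b < n" "X a = X b" for a b
    using that by (auto intro: permutes_swap_id simp: Transposition.transpose_def)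
  define \<pi>1 where "\<pi>1 = Transposition.transpose i l"
  define j' where "j' = \<pi>1 j"
  define \<pi> where "\<pi> = Transposition.transpose j' m \<circ> \<pi>1"
  have "\<pi>1 permutes {..<n}" "\<forall>k<n. X (\<pi>1 k) = X k"
    unfolding \<pi>1_def using transpose_perm ij by auto
  moreover have "j' < n" "X j' = X m"
    unfolding j'_def using permutes_in_image[OF \<open>\<pi>1 permutes _\<close>] ij \<open>\<forall>k<n. X (\<pi>1 k) = X k\<close> by auto
  ultimately have "\<pi> permutes {..<n}" "\<forall>k<n. X (\<pi> k) = X k"
    unfolding \<pi>_def using transpose_perm[of j' m] ij permutes_in_image[OF \<open>\<pi>1 permutes _\<close>]
    by (auto intro: permutes_compose)
  moreover have "\<pi> i = l" "\<pi> j = m"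
    using ij unfolding \<pi>_def j'_def \<pi>1_def by (auto simp: Transposition.transpose_def)
  ultimately show thesis using that pq by simp
qed

lemma permutation_map_in_pair_equiv:
  assumes "\<pi> permutes {..<n}" "\<forall>k<n. X (\<pi> k) = X k" "r \<in> index_pairs n"
  shows "(r, map_prod \<pi> \<pi> r) \<in> pair_equiv X n"
  using assms permutes_in_image[OF assms(1)] permutes_inj[OF assms(1)]
  unfolding pair_equiv_def index_pairs_def by (cases r) (auto simp: inj_eq)

lemma tail_indicator_permute:
  assumes \<pi>: "\<pi> permutes {..<n}" "\<forall>k<n. X (\<pi> k) = X k" and "p \<in> index_pairs n"
  shows "tail_indicator \<beta> s X A n p (restrict (\<lambda>i. y (\<pi> i)) {..<n})
       = tail_indicator \<beta> s X A n (map_prod \<pi> \<pi> p) y"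
proof -
  let ?y = "restrict (\<lambda>i. y (\<pi> i)) {..<n}"
  have score: "pair_score s X ?y r = pair_score s X y (map_prod \<pi> \<pi> r)" if "r \<in> index_pairs n" for r
    using that \<pi>(2) unfolding pair_score_def index_pairs_def by (auto simp: case_prod_beta)
  have weight: "pair_weight X A n (map_prod \<pi> \<pi> r) = pair_weight X A n r" if "r \<in> index_pairs n" for r
    unfolding pair_weight_def
    using equiv_class_eq[OF equiv_pair_equiv permutation_map_in_pair_equiv[OF \<pi> that]] by simp
  have "bij_betw (map_prod \<pi> \<pi>) (index_pairs n) (index_pairs n)"
    unfolding index_pairs_def using permutes_imp_bij[OF \<pi>(1)] by (intro bij_betw_map_prod)
  then have "pair_cdf_below s X A n ?y t = pair_cdf_below s X A n y t" for t
    unfolding pair_cdf_below_def using score weight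
    by (subst sum.reindex_bij_betw[symmetric]) (auto intro!: sum.cong)
  then show ?thesis
    unfolding tail_indicator_def score[OF \<open>p \<in> index_pairs n\<close>] by simp
qed

lemma integral_tail_indicator_pair_equiv:
  fixes M :: "(nat \<Rightarrow> 'y) measure" and Ym :: "'y measure"
  assumes sets_M: "sets M = sets (PiM {..<n} (\<lambda>_. Ym))" and "\<And>x. s x \<in> borel_measurable Ym"
    and exchangeable: "\<And>\<pi>. \<pi> permutes {..<n} \<Longrightarrow> (\<forall>i<n. X (\<pi> i) = X i) \<Longrightarrow>
           distr M M (\<lambda>y. restrict (\<lambda>i. y (\<pi> i)) {..<n}) = M"
    and "(p, q) \<in> pair_equiv X n"
  shows "(\<integral>y. tail_indicator \<beta> s X A n p y \<partial>M) = (\<integral>y. tail_indicator \<beta> s X A n q y \<partial>M)"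
proof -
  obtain \<pi> where \<pi>: "\<pi> permutes {..<n}" "\<forall>k<n. X (\<pi> k) = X k" "map_prod \<pi> \<pi> p = q"
    using pair_equiv_permutation_exists[OF \<open>(p, q) \<in> pair_equiv X n\<close>] .
  have "p \<in> index_pairs n" using \<open>(p, q) \<in> pair_equiv X n\<close> unfolding pair_equiv_def by simp
  define T where "T y = restrict (\<lambda>i. y (\<pi> i)) {..<n}" for y :: "nat \<Rightarrow> 'y"
  have "T \<in> measurable (PiM {..<n} (\<lambda>_. Ym)) (PiM {..<n} (\<lambda>_. Ym))"
    unfolding T_def using permutes_in_image[OF \<pi>(1)]
    by (intro measurable_restrict measurable_component_singleton) auto
  then have "T \<in> measurable M M"
    using measurable_cong_sets[OF sets_M sets_M] by blast
  moreover have "tail_indicator \<beta> s X A n p \<in> borel_measurable M"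
    using sets_M assms(2) \<open>p \<in> index_pairs n\<close> by (rule measurable_tail_indicator)
  ultimately have "(\<integral>y. tail_indicator \<beta> s X A n p y \<partial>distr M M T)
      = (\<integral>y. tail_indicator \<beta> s X A n p (T y) \<partial>M)"
    by (rule integral_distr)
  then show ?thesis
    unfolding T_def exchangeable[OF \<pi>(1,2)] tail_indicator_permute[OF \<pi>(1,2) \<open>p \<in> index_pairs n\<close>] \<pi>(3) .
qed

theorem theorem4:
  fixes n :: nat and X :: "nat \<Rightarrow> 'x" and A :: "nat \<Rightarrow> bool"
    and Ym :: "'y measure" and M :: "(nat \<Rightarrow> 'y) measure"
    and s :: "'x \<Rightarrow> 'y \<Rightarrow> real" and \<alpha> :: real
  assumes "prob_space M"
    and "sets M = sets (PiM {..<n} (\<lambda>_. Ym))"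
    and "\<And>x. s x \<in> borel_measurable Ym"
    and "0 < \<alpha>" and "\<alpha> < 1"
    and "\<And>\<pi>. \<pi> permutes {..<n} \<Longrightarrow> (\<forall>i<n. X (\<pi> i) = X i) \<Longrightarrow>
           distr M M (\<lambda>y. restrict (\<lambda>i. y (\<pi> i)) {..<n}) = M"
  shows "(\<integral>y. (miscov \<alpha> s X A n y)\<^sup>2 \<partial>M) \<le> \<alpha>\<^sup>2"
proof (cases "N0 A n = 0")
  case True
  then show ?thesis by (simp add: miscov_def)
next
  case False
  interpret prob_space M by fact
  let ?T = "tail_indicator (\<alpha>\<^sup>2) s X A n"
  let ?I = "unlabeled A n \<times> unlabeled A n"
  have integrable_tail: "integrable M (?T p)" if "p \<in> index_pairs n" for p
    using finite_measure assms(2,3) that by (rule integrable_tail_indicator)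
  have "(\<integral>y. (miscov \<alpha> s X A n y)\<^sup>2 \<partial>M) \<le> (\<integral>y. (\<Sum>q\<in>?I. ?T q y) / (real (N0 A n))\<^sup>2 \<partial>M)"
  \<comment> \<open>the miscoverage need not be measurable: integral_mono' only needs the bound integrable\<close>
  proof (rule integral_mono')
    show "integrable M (\<lambda>y. (\<Sum>q\<in>?I. ?T q y) / (real (N0 A n))\<^sup>2)"
      using integrable_tail unlabeled_pairs_subset by (intro integrable_divide Bochner_Integration.integrable_sum) blast
    show "0 \<le> (\<Sum>q\<in>?I. ?T q y) / (real (N0 A n))\<^sup>2" for y
      by (simp add: tail_indicator_def sum_nonneg)
  qed (rule miscov_sq_le_tail_count[OF False])
  also have "\<dots> = (\<Sum>q\<in>?I. \<integral>y. ?T q y \<partial>M) / (real (N0 A n))\<^sup>2"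
    unfolding integral_divide_zero
    by (subst Bochner_Integration.integral_sum) (use integrable_tail unlabeled_pairs_subset in blast)+
  also have "(\<Sum>q\<in>?I. \<integral>y. ?T q y \<partial>M)
      = (real (N0 A n))\<^sup>2 * (\<Sum>p\<in>index_pairs n. pair_weight X A n p * (\<integral>y. ?T p y \<partial>M))"
    by (rule sum_unlabeled_pairs_class_invariant_eq) (rule integral_tail_indicator_pair_equiv[OF assms(2,3,6)])
  also have "\<dots> / (real (N0 A n))\<^sup>2 = (\<Sum>p\<in>index_pairs n. pair_weight X A n p * (\<integral>y. ?T p y \<partial>M))"
    using False by simp
  also have "\<dots> = (\<integral>y. (\<Sum>p\<in>index_pairs n. pair_weight X A n p * ?T p y) \<partial>M)"
    using integrable_tail by (subst Bochner_Integration.integral_sum) auto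
  also have "\<dots> \<le> \<alpha>\<^sup>2"
    using integrable_tail sum_pair_weight_tail_indicator_le[OF False zero_le_power2]
    by (intro integral_le_const AE_I2) simp_all
  finally show ?thesis .
qed

end
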